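(* Let $T=K[x_1,\ldots,x_n,y_1,\ldots,y_m]$, let $\mathfrak m=(x_1,\ldots,x_n)$ and let $I\subset T$ be a monomial ideal. The following are equivalent: (a) $(I:x_1)\cap(\mathfrak mT+I)=I$; (b) whenever $x_1$ divides $u\in G(I)$, then $u=x_1y^b$ for some $b\in\mathbb{Z}_{\ge0}^m$, and $x_jy^b\in I$ for all $j=1,\ldots,n$.
   Context: $G(I)$ denotes the unique minimal set of monomial generators of the monomial ideal $I$, and $y^b=y_1^{b_1}\cdots y_m^{b_m}$ (a monomial in the $y$-variables only). *)

theory Defs
  imports "HOL-Library.Poly_Mapping"
begin

text \<open>Polynomials over a field in variables of a finite type
  Monomials are identified with exponent vectors.\<close>

type_synonym ('v, 'k) mpoly = "('v \<Rightarrow>\<^sub>0 nat) \<Rightarrow>\<^sub>0 'k"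

definition monom :: "('v \<Rightarrow>\<^sub>0 nat) \<Rightarrow> ('v, 'k::field) mpoly" where
  "monom a = Poly_Mapping.single a 1"

definition var :: "'v \<Rightarrow> ('v, 'k::field) mpoly" where
  "var v = monom (Poly_Mapping.single v 1)"

definition is_ideal :: "('v, 'k::field) mpoly set \<Rightarrow> bool" where
  "is_ideal I \<longleftrightarrow> 0 \<in> I \<and> (\<forall>f\<in>I. \<forall>g\<in>I. f + g \<in> I) \<and> (\<forall>f\<in>I. \<forall>h. h * f \<in> I)"

definition ideal_gen :: "('v, 'k::field) mpoly set \<Rightarrow> ('v, 'k) mpoly set" where
  "ideal_gen S = \<Inter>{J. is_ideal J \<and> S \<subseteq> J}"

definition monomial_ideal :: "('v, 'k::field) mpoly set \<Rightarrow> bool" where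
  "monomial_ideal I \<longleftrightarrow> is_ideal I \<and> I = ideal_gen {monom a | a. monom a \<in> I}"

definition colon :: "('v, 'k::field) mpoly set \<Rightarrow> ('v, 'k) mpoly \<Rightarrow> ('v, 'k) mpoly set" where
  "colon I f = {g. g * f \<in> I}"

definition ideal_sum :: "('v, 'k::field) mpoly set \<Rightarrow> ('v, 'k) mpoly set \<Rightarrow> ('v, 'k) mpoly set" where
  "ideal_sum I J = {f + g | f g. f \<in> I \<and> g \<in> J}"

definition mdvd :: "('v \<Rightarrow>\<^sub>0 nat) \<Rightarrow> ('v \<Rightarrow>\<^sub>0 nat) \<Rightarrow> bool" where
  "mdvd a b \<longleftrightarrow> (\<forall>v. Poly_Mapping.lookup a v \<le> Poly_Mapping.lookup b v)"

text \<open>G(I): exponents of the minimal monomial generators of a monomial ideal,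
  i.e. the monomials of I that are minimal with respect to divisibility.\<close>
definition mingens :: "('v, 'k::field) mpoly set \<Rightarrow> ('v \<Rightarrow>\<^sub>0 nat) set" where
  "mingens I = {a. monom a \<in> I \<and> (\<forall>b. monom b \<in> I \<and> mdvd b a \<longrightarrow> b = a)}"

end

theory Submission
  imports Defs
begin

text \<open>
  Membership in a monomial ideal is decided monomial by monomial, so condition (a) says:
  whenever \<open>x\<^sub>1 w \<in> I\<close> and some \<open>x\<^sub>j\<close> divides \<open>w\<close>, already \<open>w \<in> I\<close>.
  For a minimal generator \<open>u = x\<^sub>1 w\<close> this criterion forbids every \<open>x\<^sub>j\<close> in \<open>w\<close>
  (otherwise \<open>w \<in> I\<close> would be a smaller generator) and gives \<open>x\<^sub>j w \<in> I\<close>, since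
  \<open>x\<^sub>1 x\<^sub>j w\<close> is a multiple of \<open>u\<close>. Conversely, if \<open>x\<^sub>1 w \<in> I\<close> and \<open>x\<^sub>j\<close> divides \<open>w\<close>,
  pick a minimal generator \<open>u\<close> dividing \<open>x\<^sub>1 w\<close>: either \<open>x\<^sub>1\<close> does not divide \<open>u\<close>,
  so \<open>u\<close> divides \<open>w\<close>, or \<open>u = x\<^sub>1 y\<^sup>b\<close> and \<open>x\<^sub>j y\<^sup>b \<in> I\<close> divides \<open>w\<close>.
\<close>

lemma mdvd_refl: "mdvd a a"
  unfolding mdvd_def by simp

lemma mdvd_trans: "mdvd a b \<Longrightarrow> mdvd b c \<Longrightarrow> mdvd a c"
  unfolding mdvd_def using le_trans by blast

lemma mdvd_iff_add: "mdvd a b \<longleftrightarrow> (\<exists>c. b = c + a)"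
proof
  assume "mdvd a b"
  then have "b = (b - a) + a"
    unfolding mdvd_def by (intro poly_mapping_eqI) (simp add: lookup_add lookup_minus)
  then show "\<exists>c. b = c + a" ..
qed (auto simp: mdvd_def lookup_add)

lemma mdvd_add_left: "mdvd a b \<Longrightarrow> mdvd a (c + b)"
  unfolding mdvd_def lookup_add using trans_le_add2 by blast

lemma mdvd_add_cancel_left: "mdvd (c + a) (c + b) \<longleftrightarrow> mdvd a b"
  unfolding mdvd_def by (simp add: lookup_add)

lemma mdvd_single_iff: "mdvd (Poly_Mapping.single j 1) a \<longleftrightarrow> j \<in> Poly_Mapping.keys a"
  unfolding mdvd_def by (auto simp: lookup_single when_def in_keys_iff)

lemma mdvd_single_add:
  assumes "mdvd b a" "j \<notin> Poly_Mapping.keys b" "j \<in> Poly_Mapping.keys a"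
  shows "mdvd (Poly_Mapping.single j 1 + b) a"
  using assms unfolding mdvd_def by (auto simp: lookup_add lookup_single when_def in_keys_iff)

lemma mdvd_drop_single:
  assumes "mdvd u (Poly_Mapping.single x 1 + a)" "x \<notin> Poly_Mapping.keys u"
  shows "mdvd u a"
  unfolding mdvd_def
proof
  fix v
  show "Poly_Mapping.lookup u v \<le> Poly_Mapping.lookup a v"
    using assms spec[OF assms(1)[unfolded mdvd_def], of v]
    by (cases "v = x") (auto simp: lookup_add lookup_single in_keys_iff)
qed

definition total_degree :: "('v \<Rightarrow>\<^sub>0 nat) \<Rightarrow> nat" where
  "total_degree a = (\<Sum>v\<in>Poly_Mapping.keys a. Poly_Mapping.lookup a v)"

lemma total_degree_less:
  assumes "mdvd b a" "b \<noteq> a"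
  shows "total_degree b < total_degree a"
proof -
  have le: "Poly_Mapping.lookup b v \<le> Poly_Mapping.lookup a v" for v
    using assms(1) unfolding mdvd_def by blast
  have keys_le: "Poly_Mapping.keys b \<subseteq> Poly_Mapping.keys a"
  proof
    fix v assume "v \<in> Poly_Mapping.keys b"
    with le[of v] show "v \<in> Poly_Mapping.keys a" by (simp add: in_keys_iff)
  qed
  have "Poly_Mapping.lookup b \<noteq> Poly_Mapping.lookup a"
    using assms(2) poly_mapping_eq_iff by metis
  then obtain w where w: "Poly_Mapping.lookup b w < Poly_Mapping.lookup a w"
    using le order_le_neq_trans by (auto simp: fun_eq_iff)
  then have "w \<in> Poly_Mapping.keys a" by (simp add: in_keys_iff)
  have "total_degree b = (\<Sum>v\<in>Poly_Mapping.keys a. Poly_Mapping.lookup b v)"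
    unfolding total_degree_def using keys_le
    by (intro sum.mono_neutral_left) (auto simp: in_keys_iff)
  also have "\<dots> < total_degree a"
    unfolding total_degree_def
    by (rule sum_strict_mono_ex1) (use le w \<open>w \<in> Poly_Mapping.keys a\<close> in auto)
  finally show ?thesis .
qed

lemma exists_mingens_mdvd:
  "monom a \<in> I \<Longrightarrow> \<exists>u\<in>mingens I. mdvd u a"
proof (induction "total_degree a" arbitrary: a rule: less_induct)
  case less
  show ?case
  proof (cases "a \<in> mingens I")
    case True
    then show ?thesis using mdvd_refl by blast
  next
    case False
    then obtain b where b: "monom b \<in> I" "mdvd b a" "b \<noteq> a"
      using less.prems unfolding mingens_def by blast
    then obtain u where "u \<in> mingens I" "mdvd u b"
      using less.hyps total_degree_less by blast
    then show ?thesis using b(2) mdvd_trans by blast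
  qed
qed

lemma keys_monom [simp]: "Poly_Mapping.keys (monom a :: ('v, 'k::field) mpoly) = {a}"
  unfolding monom_def by simp

lemma monom_add: "(monom (a + b) :: ('v, 'k::field) mpoly) = monom a * monom b"
  unfolding monom_def by (simp add: mult_single)

lemma monom_mem_ideal_mdvd:
  assumes "is_ideal I" "monom a \<in> I" "mdvd a b"
  shows "monom b \<in> I"
proof -
  obtain c where "b = c + a" using assms(3) mdvd_iff_add by blast
  then show ?thesis using assms(1,2) unfolding is_ideal_def by (simp add: monom_add)
qed

lemma sum_mem_ideal:
  assumes "is_ideal J" "\<And>a. a \<in> A \<Longrightarrow> g a \<in> J"
  shows "sum g A \<in> J"
  using assms(2)
proof (induction A rule: infinite_finite_induct)
  case (insert x F)
  then show ?case using assms(1) unfolding is_ideal_def by simp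
qed (use assms(1) is_ideal_def in auto)

lemma poly_mapping_sum_single_keys:
  "f = (\<Sum>a\<in>Poly_Mapping.keys f. Poly_Mapping.single a (Poly_Mapping.lookup f a))"
  (is "f = ?sum")
proof (rule poly_mapping_eqI)
  fix k
  have "Poly_Mapping.lookup ?sum k
     = (\<Sum>a\<in>Poly_Mapping.keys f. if a = k then Poly_Mapping.lookup f a else 0)"
    by (simp add: lookup_sum lookup_single when_def)
  also have "\<dots> = Poly_Mapping.lookup f k"
    by (simp add: sum.delta' in_keys_iff)
  finally show "Poly_Mapping.lookup f k = Poly_Mapping.lookup ?sum k" by simp
qed

lemma lookup_mult_monom:
  "Poly_Mapping.lookup (g * (monom e :: ('v, 'k::field) mpoly)) (a + e) = Poly_Mapping.lookup g a"
proof -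
  have "g * monom e = (\<Sum>b\<in>Poly_Mapping.keys g. Poly_Mapping.single (b + e) (Poly_Mapping.lookup g b))"
    by (subst poly_mapping_sum_single_keys[of g]) (simp add: sum_distrib_right monom_def mult_single)
  then have "Poly_Mapping.lookup (g * monom e) (a + e) =
     (\<Sum>b\<in>Poly_Mapping.keys g. if b = a then Poly_Mapping.lookup g b else 0)"
    by (simp add: lookup_sum lookup_single when_def)
  also have "\<dots> = Poly_Mapping.lookup g a" by (simp add: sum.delta in_keys_iff)
  finally show ?thesis .
qed

definition monomial_span :: "('v \<Rightarrow>\<^sub>0 nat) set \<Rightarrow> ('v, 'k::field) mpoly set" where
  "monomial_span S = {f. \<forall>a\<in>Poly_Mapping.keys f. \<exists>s\<in>S. mdvd s a}"

lemma is_ideal_monomial_span: "is_ideal (monomial_span S :: ('v, 'k::field) mpoly set)"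
  unfolding is_ideal_def
proof (intro conjI ballI allI)
  show "0 \<in> monomial_span S" by (simp add: monomial_span_def)
next
  fix f g :: "('v, 'k) mpoly"
  assume "f \<in> monomial_span S" "g \<in> monomial_span S"
  then show "f + g \<in> monomial_span S"
    using keys_add[of f g] unfolding monomial_span_def by blast
next
  fix f h :: "('v, 'k) mpoly"
  assume f: "f \<in> monomial_span S"
  show "h * f \<in> monomial_span S"
    unfolding monomial_span_def
  proof (intro CollectI ballI)
    fix a assume "a \<in> Poly_Mapping.keys (h * f)"
    then obtain c b where "a = c + b" "b \<in> Poly_Mapping.keys f"
      using keys_mult by blast
    then show "\<exists>s\<in>S. mdvd s a"
      using f mdvd_add_left unfolding monomial_span_def by blast
  qed
qed

lemma monomial_span_subset:
  fixes J :: "('v, 'k::field) mpoly set"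
  assumes J: "is_ideal J" and S: "monom ` S \<subseteq> J"
  shows "monomial_span S \<subseteq> J"
proof
  fix f :: "('v, 'k) mpoly"
  assume f: "f \<in> monomial_span S"
  have "(\<Sum>a\<in>Poly_Mapping.keys f. Poly_Mapping.single 0 (Poly_Mapping.lookup f a) * monom a) \<in> J"
  proof (rule sum_mem_ideal[OF J])
    fix a assume "a \<in> Poly_Mapping.keys f"
    then obtain s where "s \<in> S" "mdvd s a"
      using f unfolding monomial_span_def by blast
    then have "monom a \<in> J" using monom_mem_ideal_mdvd J S by blast
    then show "Poly_Mapping.single 0 (Poly_Mapping.lookup f a) * monom a \<in> J"
      using J unfolding is_ideal_def by blast
  qed
  then show "f \<in> J"
    by (subst poly_mapping_sum_single_keys) (simp add: monom_def mult_single)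
qed

lemma ideal_gen_monom: "ideal_gen (monom ` S) = (monomial_span S :: ('v, 'k::field) mpoly set)"
proof
  have "monom s \<in> monomial_span S" if "s \<in> S" for s
    using that mdvd_refl by (auto simp: monomial_span_def)
  then show "ideal_gen (monom ` S) \<subseteq> monomial_span S"
    unfolding ideal_gen_def using is_ideal_monomial_span by blast
  show "monomial_span S \<subseteq> ideal_gen (monom ` S)"
    unfolding ideal_gen_def using monomial_span_subset by blast
qed

lemma monom_mem_ideal_gen_monom:
  "monom a \<in> ideal_gen (monom ` S) \<longleftrightarrow> (\<exists>s\<in>S. mdvd s a)"
  by (simp add: ideal_gen_monom monomial_span_def)

lemma monomial_ideal_mem_iff:
  assumes "monomial_ideal I"
  shows "f \<in> I \<longleftrightarrow> (\<forall>a\<in>Poly_Mapping.keys f. monom a \<in> I)"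
proof -
  define E where "E = {a. monom a \<in> I}"
  have "I = ideal_gen (monom ` E)"
    using assms unfolding monomial_ideal_def E_def by (simp add: setcompr_eq_image)
  then have "f \<in> I \<longleftrightarrow> (\<forall>a\<in>Poly_Mapping.keys f. \<exists>s\<in>E. mdvd s a)"
    by (simp add: ideal_gen_monom monomial_span_def)
  moreover have "is_ideal I" using assms unfolding monomial_ideal_def by blast
  ultimately show ?thesis
    unfolding E_def using mdvd_refl monom_mem_ideal_mdvd by blast
qed

lemma monomial_ideal_ideal_gen_monom:
  fixes S :: "('v \<Rightarrow>\<^sub>0 nat) set"
  shows "monomial_ideal (ideal_gen (monom ` S) :: ('v, 'k::field) mpoly set)"
proof -
  let ?J = "ideal_gen (monom ` S) :: ('v, 'k) mpoly set"
  let ?D = "{a. \<exists>s\<in>S. mdvd s a}"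
  have gens: "{monom a | a. monom a \<in> ?J} = monom ` ?D"
    by (auto simp: monom_mem_ideal_gen_monom)
  have "ideal_gen {monom a | a. monom a \<in> ?J} = monomial_span ?D"
    unfolding gens by (rule ideal_gen_monom)
  also have "\<dots> = monomial_span S"
    unfolding monomial_span_def using mdvd_refl mdvd_trans by blast
  also have "\<dots> = ?J"
    by (rule ideal_gen_monom[symmetric])
  finally have "ideal_gen {monom a | a. monom a \<in> ?J} = ?J" .
  moreover have "is_ideal ?J"
    unfolding ideal_gen_monom by (rule is_ideal_monomial_span)
  ultimately show ?thesis
    unfolding monomial_ideal_def by simp
qed

lemma var_image: "var ` X = monom ` ((\<lambda>j. Poly_Mapping.single j 1) ` X)"
  unfolding var_def by auto

lemma monom_mem_ideal_gen_var:
  "monom a \<in> ideal_gen (var ` X) \<longleftrightarrow> Poly_Mapping.keys a \<inter> X \<noteq> {}"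
proof -
  have "(\<exists>s\<in>(\<lambda>j. Poly_Mapping.single j 1) ` X. mdvd s a) \<longleftrightarrow>
      (\<exists>j\<in>X. mdvd (Poly_Mapping.single j 1) a)"
    by blast
  then show ?thesis
    unfolding var_image monom_mem_ideal_gen_monom mdvd_single_iff by blast
qed

lemma monomial_ideal_ideal_gen_var: "monomial_ideal (ideal_gen (var ` X))"
  unfolding var_image by (rule monomial_ideal_ideal_gen_monom)

lemma subset_colon_inter_ideal_sum:
  assumes "is_ideal I" "is_ideal J"
  shows "I \<subseteq> colon I f \<inter> ideal_sum J I"
proof
  fix g assume "g \<in> I"
  then have "g * f \<in> I" "g \<in> ideal_sum J I"
    using assms unfolding is_ideal_def ideal_sum_def by (auto simp: mult.commute) force
  then show "g \<in> colon I f \<inter> ideal_sum J I"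
    unfolding colon_def by simp
qed

lemma monom_mem_if_mem_colon_var:
  assumes "monomial_ideal I" "g \<in> colon I (var x)" "a \<in> Poly_Mapping.keys g"
  shows "monom (Poly_Mapping.single x 1 + a) \<in> I"
proof -
  have "g * monom (Poly_Mapping.single x 1) \<in> I"
    using assms(2) unfolding colon_def var_def by simp
  moreover have "a + Poly_Mapping.single x 1 \<in> Poly_Mapping.keys (g * monom (Poly_Mapping.single x 1))"
    using assms(3) by (simp add: lookup_mult_monom in_keys_iff)
  ultimately show ?thesis
    using monomial_ideal_mem_iff[OF assms(1)] by (metis add.commute)
qed

lemma colon_var_inter_ideal_sum_eq_iff:
  assumes I: "monomial_ideal I" and J: "monomial_ideal J"
  shows "colon I (var x) \<inter> ideal_sum J I = I \<longleftrightarrow>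
    (\<forall>a. monom (Poly_Mapping.single x 1 + a) \<in> I \<longrightarrow> monom a \<in> J \<longrightarrow> monom a \<in> I)"
proof
  assume eq: "colon I (var x) \<inter> ideal_sum J I = I"
  show "\<forall>a. monom (Poly_Mapping.single x 1 + a) \<in> I \<longrightarrow> monom a \<in> J \<longrightarrow> monom a \<in> I"
  proof (intro allI impI)
    fix a assume "monom (Poly_Mapping.single x 1 + a) \<in> I" "monom a \<in> J"
    moreover have "is_ideal I" using I unfolding monomial_ideal_def by blast
    ultimately have "monom a \<in> colon I (var x)" "monom a \<in> ideal_sum J I"
      unfolding colon_def var_def ideal_sum_def is_ideal_def
      by (auto simp: monom_add[symmetric] add.commute) force
    then show "monom a \<in> I" using eq by auto
  qed
next
  assume crit: "\<forall>a. monom (Poly_Mapping.single x 1 + a) \<in> I \<longrightarrow> monom a \<in> J \<longrightarrow> monom a \<in> I"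
  have "g \<in> I" if g: "g \<in> colon I (var x)" "g \<in> ideal_sum J I" for g
  proof -
    obtain p q where pq: "g = p + q" "p \<in> J" "q \<in> I"
      using g(2) unfolding ideal_sum_def by blast
    have "monom a \<in> I" if a: "a \<in> Poly_Mapping.keys g" for a
    proof -
      have "a \<in> Poly_Mapping.keys p \<or> a \<in> Poly_Mapping.keys q"
        using a keys_add[of p q] unfolding pq(1) by blast
      moreover have "monom a \<in> J" if "a \<in> Poly_Mapping.keys p"
        using that pq(2) monomial_ideal_mem_iff[OF J] by blast
      moreover have "monom a \<in> I" if "a \<in> Poly_Mapping.keys q"
        using that pq(3) monomial_ideal_mem_iff[OF I] by blast
      ultimately show ?thesis
        using crit monom_mem_if_mem_colon_var[OF I g(1) a] by blast
    qed
    then show ?thesis using monomial_ideal_mem_iff[OF I] by blast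
  qed
  moreover have "I \<subseteq> colon I (var x) \<inter> ideal_sum J I"
    using I J subset_colon_inter_ideal_sum unfolding monomial_ideal_def by blast
  ultimately show "colon I (var x) \<inter> ideal_sum J I = I" by blast
qed

lemma mingens_shape_if_criterion:
  assumes I: "is_ideal I"
    and crit: "\<forall>a. monom (Poly_Mapping.single x 1 + a) \<in> I \<longrightarrow>
      Poly_Mapping.keys a \<inter> X \<noteq> {} \<longrightarrow> monom a \<in> I"
    and u: "u \<in> mingens I" "1 \<le> Poly_Mapping.lookup u x"
  shows "\<exists>b. Poly_Mapping.keys b \<subseteq> - X \<and> u = Poly_Mapping.single x 1 + b \<and>
    (\<forall>j\<in>X. monom (Poly_Mapping.single j 1 + b) \<in> I)"
proof -
  have "mdvd (Poly_Mapping.single x 1) u"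
    unfolding mdvd_single_iff using u(2) by (simp add: in_keys_iff)
  then obtain b where "u = b + Poly_Mapping.single x 1"
    unfolding mdvd_iff_add by blast
  then have ub: "u = Poly_Mapping.single x 1 + b"
    by (simp add: add.commute)
  have uI: "monom u \<in> I"
    using u(1) unfolding mingens_def by blast
  have "Poly_Mapping.keys b \<inter> X = {}"
  proof (rule ccontr)
    assume "Poly_Mapping.keys b \<inter> X \<noteq> {}"
    then have "monom b \<in> I" using crit uI ub by blast
    moreover have "mdvd b u" unfolding ub by (rule mdvd_add_left[OF mdvd_refl])
    ultimately have "b = u" using u(1) unfolding mingens_def by blast
    moreover have "Poly_Mapping.lookup u x = 1 + Poly_Mapping.lookup b x"
      using ub by (simp add: lookup_add)
    ultimately show False by simp
  qed
  moreover have "monom (Poly_Mapping.single j 1 + b) \<in> I" if j: "j \<in> X" for j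
  proof -
    have "mdvd u (Poly_Mapping.single j 1 + u)" by (rule mdvd_add_left[OF mdvd_refl])
    then have "monom (Poly_Mapping.single x 1 + (Poly_Mapping.single j 1 + b)) \<in> I"
      using monom_mem_ideal_mdvd[OF I uI] by (simp add: ub ac_simps)
    moreover have "j \<in> Poly_Mapping.keys (Poly_Mapping.single j 1 + b)"
      by (simp add: in_keys_iff lookup_add)
    ultimately show ?thesis using crit j by blast
  qed
  ultimately show ?thesis using ub by blast
qed

lemma criterion_if_mingens_shape:
  fixes I :: "('v, 'k::field) mpoly set"
  assumes I: "is_ideal I"
    and shape: "\<forall>u\<in>mingens I. 1 \<le> Poly_Mapping.lookup u x \<longrightarrow>
      (\<exists>b. Poly_Mapping.keys b \<subseteq> - X \<and> u = Poly_Mapping.single x 1 + b \<and>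
        (\<forall>j\<in>X. monom (Poly_Mapping.single j 1 + b) \<in> I))"
    and a: "monom (Poly_Mapping.single x 1 + a) \<in> I" "Poly_Mapping.keys a \<inter> X \<noteq> {}"
  shows "monom a \<in> I"
proof -
  obtain j where j: "j \<in> Poly_Mapping.keys a" "j \<in> X"
    using a(2) by blast
  obtain u where u: "u \<in> mingens I" "mdvd u (Poly_Mapping.single x 1 + a)"
    using exists_mingens_mdvd[OF a(1)] by blast
  have uI: "monom u \<in> I"
    using u(1) unfolding mingens_def by blast
  show ?thesis
  proof (cases "x \<in> Poly_Mapping.keys u")
    case False
    then have "mdvd u a" by (rule mdvd_drop_single[OF u(2)])
    then show ?thesis using monom_mem_ideal_mdvd[OF I uI] by blast
  next
    case True
    then have "1 \<le> Poly_Mapping.lookup u x" by (simp add: in_keys_iff)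
    then obtain b where b: "Poly_Mapping.keys b \<subseteq> - X" "u = Poly_Mapping.single x 1 + b"
      "\<forall>j\<in>X. monom (Poly_Mapping.single j 1 + b) \<in> I"
      using shape u(1) by meson
    have "mdvd b a" using u(2) unfolding b(2) mdvd_add_cancel_left .
    moreover have "j \<notin> Poly_Mapping.keys b" using b(1) j(2) by blast
    ultimately have "mdvd (Poly_Mapping.single j 1 + b) a"
      using j(1) by (rule mdvd_single_add)
    then show ?thesis using monom_mem_ideal_mdvd[OF I] b(3) j(2) by meson
  qed
qed

lemma criterion_iff_mingens_shape:
  fixes I :: "('v, 'k::field) mpoly set"
  assumes I: "is_ideal I"
  shows "(\<forall>a. monom (Poly_Mapping.single x 1 + a) \<in> I \<longrightarrow>
      Poly_Mapping.keys a \<inter> X \<noteq> {} \<longrightarrow> monom a \<in> I) \<longleftrightarrow>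
    (\<forall>u\<in>mingens I. 1 \<le> Poly_Mapping.lookup u x \<longrightarrow>
      (\<exists>b. Poly_Mapping.keys b \<subseteq> - X \<and> u = Poly_Mapping.single x 1 + b \<and>
        (\<forall>j\<in>X. monom (Poly_Mapping.single j 1 + b) \<in> I)))"
    (is "?criterion \<longleftrightarrow> ?shape")
proof
  assume ?criterion
  then show ?shape using mingens_shape_if_criterion[OF I] by blast
next
  assume ?shape
  then show ?criterion using criterion_if_mingens_shape[OF I] by blast
qed

theorem lemma1p8:
  fixes X :: "'v::finite set" and x1 :: 'v and I :: "('v, 'k::field) mpoly set"
  assumes "x1 \<in> X" \<comment> \<open>not needed: the argument works for any variable x1\<close>
    and "monomial_ideal I"
  shows "(colon I (var x1) \<inter> ideal_sum (ideal_gen (var ` X)) I = I) \<longleftrightarrow>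
    (\<forall>u \<in> mingens I. Poly_Mapping.lookup u x1 \<ge> 1 \<longrightarrow>
       (\<exists>b. Poly_Mapping.keys b \<subseteq> - X \<and> u = Poly_Mapping.single x1 1 + b \<and>
            (\<forall>j \<in> X. monom (Poly_Mapping.single j 1 + b) \<in> I)))"
proof -
  have I: "is_ideal I" using assms(2) unfolding monomial_ideal_def by blast
  show ?thesis
    unfolding colon_var_inter_ideal_sum_eq_iff[OF assms(2) monomial_ideal_ideal_gen_var]
      monom_mem_ideal_gen_var criterion_iff_mingens_shape[OF I] ..
qed

end
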